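(* Let $G\le S_n$ be fusion controlled and $C$ a connected component of $\widetilde P_0(G)$, and let $\mathcal T(C)$ be the set of types of vertices of $C$. For $T\in\mathcal T(G_0)$ let $k(T)$ be the number of vertices of $\widetilde P_0(G)$ of type $T$. Then: (i) for all $T,T'\in\mathcal T(C)$, $k(T)/k_C(T)=k(T')/k_C(T')$; (ii) $C$ is isomorphic to its image $\widetilde t(C)$ iff there exists $T\in\mathcal T(C)$ with $k_C(T)=1$ and $k(T)=k(T')$ for every $T'\in\mathcal T(C)$; (iii) if $C$ contains all vertices of $\widetilde P_0(G)$ of some type $T$, then $C$ contains all vertices of type $T'$ for every $T'\in\mathcal T(C)$; (iv) if some $T\in\mathcal T(C)$ satisfies $k_C(T)=k(T)>1$, then $C\not\cong\widetilde t(C)$.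
   Context: $G_0=G\setminus\{1\}$; $[x]=\{y:\langle y\rangle=\langle x\rangle\}$; $\widetilde P_0(G)$: vertex set $\{[x]:x\in G_0\}$, distinct $[x],[y]$ adjacent iff some representatives are one a positive power of the other. For $\psi\in S_n$, $T_\psi$ is the partition of $n$ given by orbit lengths of $\langle\psi\rangle$; the type of $[\psi]$ is $T_\psi$. For $T=[m_1^{t_1},\dots,m_k^{t_k}]$, $T^a=[(m_i/\gcd(a,m_i))^{t_i\gcd(a,m_i)}]_i$. $\mathcal T(G_0)=\{T_\psi:\psi\in G_0\}$; $P_0(\mathcal T(G))$: vertex set $\mathcal T(G_0)$, distinct $T,T'$ adjacent iff one is a power of the other. $\widetilde t(C)$ is the subgraph of $P_0(\mathcal T(G))$ with vertex set $\mathcal T(C)$ and edges $\{T_\psi,T_\varphi\}$ for edges $\{[\psi],[\varphi]\}$ of $C$. $k_C(T)$ is the number of vertices of $C$ of type $T$. $G$ is fusion controlled if for all $\psi\in G$, $x\in S_n$ with $x^{-1}\psi x\in G$ there is $y\in N_{S_n}(G)$ with $x^{-1}\psi x=y^{-1}\psi y$. *)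

theory Defs
  imports Complex_Main "HOL-Combinatorics.Permutations" "HOL-Library.Multiset"
begin

definition Sym :: "nat \<Rightarrow> (nat \<Rightarrow> nat) set" where
  "Sym n = {p. p permutes {..<n}}"

definition is_perm_group :: "nat \<Rightarrow> (nat \<Rightarrow> nat) set \<Rightarrow> bool" where
  "is_perm_group n G \<longleftrightarrow> G \<subseteq> Sym n \<and> id \<in> G \<and>
     (\<forall>p\<in>G. \<forall>q\<in>G. p \<circ> q \<in> G) \<and> (\<forall>p\<in>G. inv p \<in> G)"

definition cyc :: "(nat \<Rightarrow> nat) \<Rightarrow> (nat \<Rightarrow> nat) set" where
  "cyc x = {x ^^ k | k. True}"

definition normalizer :: "nat \<Rightarrow> (nat \<Rightarrow> nat) set \<Rightarrow> (nat \<Rightarrow> nat) set" where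
  "normalizer n G = {y \<in> Sym n. (\<lambda>g. inv y \<circ> g \<circ> y) ` G = G}"

definition fusion_controlled :: "nat \<Rightarrow> (nat \<Rightarrow> nat) set \<Rightarrow> bool" where
  "fusion_controlled n G \<longleftrightarrow>
     (\<forall>\<psi>\<in>G. \<forall>x\<in>Sym n. inv x \<circ> \<psi> \<circ> x \<in> G \<longrightarrow>
        (\<exists>y\<in>normalizer n G. inv x \<circ> \<psi> \<circ> x = inv y \<circ> \<psi> \<circ> y))"

definition nontriv :: "(nat \<Rightarrow> nat) set \<Rightarrow> (nat \<Rightarrow> nat) set" where
  "nontriv G = G - {id}"

definition gen_class :: "(nat \<Rightarrow> nat) set \<Rightarrow> (nat \<Rightarrow> nat) \<Rightarrow> (nat \<Rightarrow> nat) set" where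
  "gen_class G x = {y \<in> G. cyc y = cyc x}"

definition rpg_vertices :: "(nat \<Rightarrow> nat) set \<Rightarrow> (nat \<Rightarrow> nat) set set" where
  "rpg_vertices G = gen_class G ` nontriv G"

definition rpg_adj :: "(nat \<Rightarrow> nat) set \<Rightarrow> (nat \<Rightarrow> nat) set \<Rightarrow> (nat \<Rightarrow> nat) set \<Rightarrow> bool" where
  "rpg_adj G a b \<longleftrightarrow> a \<in> rpg_vertices G \<and> b \<in> rpg_vertices G \<and> a \<noteq> b \<and>
     (\<exists>x\<in>a. \<exists>y\<in>b. (\<exists>k\<ge>1. x = y ^^ k) \<or> (\<exists>k\<ge>1. y = x ^^ k))"

definition is_component :: "'v set \<Rightarrow> ('v \<Rightarrow> 'v \<Rightarrow> bool) \<Rightarrow> 'v set \<Rightarrow> bool" where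
  "is_component V adj C \<longleftrightarrow> (\<exists>v\<in>V. C = {w \<in> V.
      (\<lambda>a b. a \<in> V \<and> b \<in> V \<and> adj a b)\<^sup>*\<^sup>* v w})"

definition orbit_cyc :: "(nat \<Rightarrow> nat) \<Rightarrow> nat \<Rightarrow> nat set" where
  "orbit_cyc \<psi> i = {(\<psi> ^^ k) i | k. True}"

definition perm_type :: "nat \<Rightarrow> (nat \<Rightarrow> nat) \<Rightarrow> nat multiset" where
  "perm_type n \<psi> = image_mset card (mset_set (orbit_cyc \<psi> ` {..<n}))"

text \<open>type of a vertex [psi] (well defined: representatives generate the same cyclic group)\<close>
definition vtype :: "nat \<Rightarrow> (nat \<Rightarrow> nat) set \<Rightarrow> nat multiset" where
  "vtype n v = perm_type n (SOME \<psi>. \<psi> \<in> v)"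

text \<open>k(T): number of vertices of type T; k_C(T): those in C\<close>
definition kcount :: "nat \<Rightarrow> (nat \<Rightarrow> nat) set set \<Rightarrow> nat multiset \<Rightarrow> nat" where
  "kcount n V T = card {v \<in> V. vtype n v = T}"

definition timg_adj :: "nat \<Rightarrow> (nat \<Rightarrow> nat) set \<Rightarrow> (nat \<Rightarrow> nat) set set \<Rightarrow>
    nat multiset \<Rightarrow> nat multiset \<Rightarrow> bool" where
  "timg_adj n G C T T' \<longleftrightarrow>
     (\<exists>a\<in>C. \<exists>b\<in>C. rpg_adj G a b \<and> vtype n a = T \<and> vtype n b = T')"

definition graph_iso :: "'a set \<Rightarrow> ('a \<Rightarrow> 'a \<Rightarrow> bool) \<Rightarrow> 'b set \<Rightarrow> ('b \<Rightarrow> 'b \<Rightarrow> bool) \<Rightarrow> bool" where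
  "graph_iso V1 E1 V2 E2 \<longleftrightarrow>
     (\<exists>f. bij_betw f V1 V2 \<and> (\<forall>x\<in>V1. \<forall>y\<in>V1. E1 x y \<longleftrightarrow> E2 (f x) (f y)))"

end

theory Submission
  imports Defs "HOL-Combinatorics.Orbits"
begin

text \<open>The normalizer \<open>N\<close> of \<open>G\<close> acts on the reduced power graph by conjugation, preserving
  adjacency and types. Since permutations of equal cycle type are conjugate in \<open>S\<^sub>n\<close>, fusion
  control makes this action transitive on the vertices of each type. So the \<open>N\<close>-translates of
  \<open>C\<close> are components that together cover every type class meeting \<open>C\<close>, and each contains
  \<open>k\<^sub>C(T)\<close> vertices of type \<open>T\<close>; hence \<open>k(T) = m k\<^sub>C(T)\<close> with \<open>m\<close> the number of translates.
  All four claims follow from this, since \<open>C\<close> is isomorphic to its type graph exactly when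
  the type map is injective on \<open>C\<close>.\<close>

section \<open>Permutations with equal orbit lengths are conjugate\<close>

lemma orbit_cyc_eq_orbit: "permutation f \<Longrightarrow> orbit_cyc f i = orbit f i"
  unfolding orbit_cyc_def by (simp add: orbit_altdef_permutation)

lemma orbit_eq_if_mem: "permutation f \<Longrightarrow> y \<in> orbit f x \<Longrightarrow> orbit f y = orbit f x"
  by (metis cyclic_on_orbit' orbit_cyclic_eq3)

lemma orbit_period:
  assumes "permutation f"
  shows "0 < card (orbit f s)" and "(f ^^ card (orbit f s)) s = s"
    and "inj_on (\<lambda>k. (f ^^ k) s) {..<card (orbit f s)}"
proof -
  have s: "s \<in> orbit f s" using assms permutation_self_in_orbit by metis
  have card: "card (orbit f s) = funpow_dist1 f s s"
    using orbit_conv_funpow_dist1[OF s] inj_on_funpow_dist1[OF s] card_image by fastforce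
  show "0 < card (orbit f s)" using card by simp
  show "(f ^^ card (orbit f s)) s = s" using card funpow_dist1_prop[OF s] by simp
  show "inj_on (\<lambda>k. (f ^^ k) s) {..<card (orbit f s)}"
    using card inj_on_funpow_dist1[OF s] by (simp add: atLeast0LessThan)
qed

lemma funpow_dist_eq_mod:
  assumes f: "permutation f" and a: "(f ^^ m) s = a"
  shows "funpow_dist f s a = m mod card (orbit f s)"
proof -
  define c where "c = card (orbit f s)"
  have a_orbit: "a \<in> orbit f s"
    using a funpow_in_orbit permutation_self_in_orbit[OF f] by metis
  have mod_reaches: "(f ^^ (m mod c)) s = a"
    using a funpow_mod_eq[where f=f and n=c and x=s and m=m] orbit_period(2)[OF f] by (simp add: c_def)
  have "funpow_dist f s a \<le> m mod c"
    unfolding funpow_dist_def using mod_reaches by (rule Least_le)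
  moreover have "m mod c < c" using orbit_period(1)[OF f] by (simp add: c_def)
  ultimately show ?thesis
    using orbit_period(3)[OF f, of s] funpow_dist_prop[OF a_orbit] mod_reaches
    unfolding c_def[symmetric] inj_on_def by (metis lessThan_iff le_less_trans)
qed

lemma funpow_dist_less_card:
  "permutation f \<Longrightarrow> a \<in> orbit f s \<Longrightarrow> funpow_dist f s a < card (orbit f s)"
  by (metis funpow_dist_eq_mod funpow_dist_prop mod_less_divisor orbit_period(1))

lemma orbit_transport:
  assumes "permutation p" "permutation q" "card (orbit p i) = card (orbit q j)"
  shows "(p ^^ funpow_dist q j ((q ^^ k) j)) i = (p ^^ k) i"
  using assms funpow_dist_eq_mod[OF assms(2) refl] funpow_mod_eq orbit_period(2)[OF assms(1)]
  by metis

lemma inj_on_orbit_transport: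
  assumes p: "permutation p" and q: "permutation q"
    and card: "card (orbit p i) = card (orbit q j)"
  shows "inj_on (\<lambda>a. (p ^^ funpow_dist q j a) i) (orbit q j)"
proof
  fix a b assume a: "a \<in> orbit q j" and b: "b \<in> orbit q j"
    and eq: "(p ^^ funpow_dist q j a) i = (p ^^ funpow_dist q j b) i"
  have "funpow_dist q j a = funpow_dist q j b"
    using orbit_period(3)[OF p, of i] eq card funpow_dist_less_card[OF q] a b
    unfolding inj_on_def by simp
  then show "a = b" using funpow_dist_prop a b by metis
qed

lemma image_mset_mset_set_eq_imp_bij:
  assumes "finite X" "finite Y" "image_mset g (mset_set X) = image_mset h (mset_set Y)"
  shows "\<exists>\<beta>. bij_betw \<beta> X Y \<and> (\<forall>x\<in>X. h (\<beta> x) = g x)"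
  using assms
proof (induction X arbitrary: Y rule: finite_induct)
  case empty
  then show ?case by (auto simp: mset_set_empty_iff bij_betw_def)
next
  case (insert x X)
  have "image_mset h (mset_set Y) = add_mset (g x) (image_mset g (mset_set X))"
    using insert.prems(2) insert.hyps by simp
  then have "g x \<in># image_mset h (mset_set Y)" by simp
  then obtain y where y: "y \<in> Y" "h y = g x" using insert.prems(1) by auto
  have "mset_set Y = add_mset y (mset_set (Y - {y}))"
    using y insert.prems(1) by (simp add: mset_set.remove)
  then have "image_mset g (mset_set X) = image_mset h (mset_set (Y - {y}))"
    using insert.prems(2) insert.hyps y(2) by simp
  then obtain \<beta> where \<beta>: "bij_betw \<beta> X (Y - {y})" "\<forall>x\<in>X. h (\<beta> x) = g x"
    using insert.IH insert.prems(1) by blast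
  define \<beta>' where "\<beta>' = \<beta>(x := y)"
  have "\<forall>a\<in>X. \<beta>' a = \<beta> a" using insert.hyps(2) unfolding \<beta>'_def by auto
  then have "bij_betw \<beta>' X (Y - {y})" using \<beta>(1) bij_betw_cong by metis
  then have "bij_betw \<beta>' (X \<union> {x}) ((Y - {y}) \<union> {\<beta>' x})"
    using notIn_Un_bij_betw3[of x X \<beta>' "Y - {y}"] insert.hyps(2) unfolding \<beta>'_def by simp
  moreover have "(Y - {y}) \<union> {\<beta>' x} = Y" using y(1) unfolding \<beta>'_def by auto
  ultimately have "bij_betw \<beta>' (insert x X) Y" by simp
  then show ?case using \<beta>(2) y(2) unfolding \<beta>'_def by (metis fun_upd_apply insert_iff)
qed

lemma orbit_some_elem: "permutation f \<Longrightarrow> orbit f (some_elem (orbit f b)) = orbit f b"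
  using orbit_eq_if_mem some_elem_nonempty orbit_nonempty by metis

text \<open>Given a length-preserving matching \<open>\<beta>\<close> of the orbits of \<open>q\<close> with those of \<open>p\<close>, send
  \<open>(q ^^ k) j\<close> to \<open>(p ^^ k) i\<close>, where \<open>j\<close> and \<open>i\<close> are chosen base points of matched orbits.\<close>

definition orbit_matching :: "('a \<Rightarrow> 'a) \<Rightarrow> ('a \<Rightarrow> 'a) \<Rightarrow> ('a set \<Rightarrow> 'a set) \<Rightarrow> 'a set \<Rightarrow> 'a \<Rightarrow> 'a" where
  "orbit_matching p q \<beta> A a = (if a \<in> A
     then (p ^^ funpow_dist q (some_elem (orbit q a)) a) (some_elem (\<beta> (orbit q a))) else a)"

context
  fixes A :: "'a set" and p q :: "'a \<Rightarrow> 'a" and \<beta> :: "'a set \<Rightarrow> 'a set"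
  assumes A: "finite A" and p: "p permutes A" and q: "q permutes A"
    and \<beta>: "bij_betw \<beta> (orbit q ` A) (orbit p ` A)"
    and card_\<beta>: "\<forall>B\<in>orbit q ` A. card (\<beta> B) = card B"
begin

private lemma permutations: "permutation p" "permutation q"
  using A p q permutes_imp_permutation by blast+

private lemma matched_base:
  assumes a: "a \<in> A"
  shows "orbit p (some_elem (\<beta> (orbit q a))) = \<beta> (orbit q a)" and "\<beta> (orbit q a) \<subseteq> A"
    and "card (orbit p (some_elem (\<beta> (orbit q a)))) = card (orbit q (some_elem (orbit q a)))"
proof -
  obtain c where c: "c \<in> A" "\<beta> (orbit q a) = orbit p c" using \<beta> a bij_betwE by blast
  show pb: "orbit p (some_elem (\<beta> (orbit q a))) = \<beta> (orbit q a)"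
    unfolding c(2) using orbit_some_elem[OF permutations(1)] .
  show "\<beta> (orbit q a) \<subseteq> A" using c permutes_orbit_subset[OF p] by metis
  show "card (orbit p (some_elem (\<beta> (orbit q a)))) = card (orbit q (some_elem (orbit q a)))"
    using pb card_\<beta> a orbit_some_elem[OF permutations(2)] by simp
qed

lemma orbit_matching_commute: "orbit_matching p q \<beta> A (q a) = p (orbit_matching p q \<beta> A a)"
proof (cases "a \<in> A")
  case True
  define j where "j = some_elem (orbit q a)"
  define i where "i = some_elem (\<beta> (orbit q a))"
  define d where "d = funpow_dist q j a"
  have "orbit q (q a) = orbit q a" using permutation_orbit_step[OF permutations(2)] .
  then have qa: "q a \<in> A" "some_elem (orbit q (q a)) = j" "some_elem (\<beta> (orbit q (q a))) = i"
    using permutes_in_image[OF q] True by (simp_all add: j_def i_def)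
  have "a \<in> orbit q j"
    using orbit_some_elem[OF permutations(2)] permutation_self_in_orbit[OF permutations(2)]
    unfolding j_def by metis
  then have step: "q a = (q ^^ Suc d) j" using funpow_dist_prop[of a q j] by (simp add: d_def)
  have "orbit_matching p q \<beta> A (q a) = (p ^^ funpow_dist q j (q a)) i"
    using qa by (simp add: orbit_matching_def)
  also have "\<dots> = (p ^^ Suc d) i"
    unfolding step
    by (rule orbit_transport[OF permutations matched_base(3)[OF True, folded i_def j_def]])
  also have "\<dots> = p (orbit_matching p q \<beta> A a)"
    using True by (simp add: orbit_matching_def d_def i_def j_def)
  finally show ?thesis .
next
  case False
  then show ?thesis using p q by (simp add: orbit_matching_def permutes_not_in)
qed

lemma orbit_matching_permutes: "orbit_matching p q \<beta> A permutes A"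
proof -
  let ?x = "orbit_matching p q \<beta> A"
  have in_matched: "?x a \<in> \<beta> (orbit q a)" if "a \<in> A" for a
    using that funpow_in_orbit[OF permutation_self_in_orbit[OF permutations(1)]]
      matched_base(1)[OF that] by (metis orbit_matching_def)
  have "inj_on ?x A"
  proof
    fix a b assume a: "a \<in> A" and b: "b \<in> A" and eq: "?x a = ?x b"
    then have "\<beta> (orbit q a) = \<beta> (orbit q b)"
      using in_matched orbit_eq_if_mem[OF permutations(1)] matched_base(1) by metis
    then have same_orbit: "orbit q a = orbit q b"
      using \<beta> a b unfolding bij_betw_def inj_on_def by blast
    have "a \<in> orbit q (some_elem (orbit q a))" "b \<in> orbit q (some_elem (orbit q a))"
      using orbit_some_elem[OF permutations(2)] permutation_self_in_orbit[OF permutations(2)]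
        same_orbit by metis+
    then show "a = b"
      using inj_on_orbit_transport[OF permutations matched_base(3)[OF a]] eq a b same_orbit
      unfolding inj_on_def orbit_matching_def by auto
  qed
  moreover have "?x ` A \<subseteq> A" using in_matched matched_base(2) by blast
  ultimately have "bij_betw ?x A A" using endo_inj_surj[OF A] by (auto simp: bij_betw_def)
  then show ?thesis by (rule bij_imp_permutes) (simp add: orbit_matching_def)
qed

end

lemma permutes_conjugate_if_orbit_lengths_eq:
  assumes A: "finite A" and p: "p permutes A" and q: "q permutes A"
    and lengths: "image_mset card (mset_set (orbit q ` A)) = image_mset card (mset_set (orbit p ` A))"
  shows "\<exists>x. x permutes A \<and> x \<circ> q = p \<circ> x"
proof -
  obtain \<beta> where \<beta>: "bij_betw \<beta> (orbit q ` A) (orbit p ` A)"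
    and card_\<beta>: "\<forall>B\<in>orbit q ` A. card (\<beta> B) = card B"
    using image_mset_mset_set_eq_imp_bij[OF _ _ lengths] A by auto
  show ?thesis
    using orbit_matching_permutes[OF A p q \<beta> card_\<beta>] orbit_matching_commute[OF A p q \<beta> card_\<beta>]
    by (intro exI[of _ "orbit_matching p q \<beta> A"]) auto
qed

lemma perm_type_eq_imp_conjugate:
  assumes "\<psi> permutes {..<n}" "\<phi> permutes {..<n}" "perm_type n \<psi> = perm_type n \<phi>"
  shows "\<exists>x. x permutes {..<n} \<and> x \<circ> \<phi> = \<psi> \<circ> x"
proof -
  have "orbit_cyc \<psi> = orbit \<psi>" "orbit_cyc \<phi> = orbit \<phi>"
    using assms(1,2) orbit_cyc_eq_orbit permutes_imp_permutation by blast+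
  then show ?thesis
    using permutes_conjugate_if_orbit_lengths_eq[OF _ assms(1,2)] assms(3)[symmetric]
    unfolding perm_type_def by simp
qed

section \<open>Conjugation by the normalizer\<close>

definition perm_conj :: "('a \<Rightarrow> 'a) \<Rightarrow> ('a \<Rightarrow> 'a) \<Rightarrow> 'a \<Rightarrow> 'a" where
  "perm_conj y g = inv y \<circ> g \<circ> y"

lemma perm_conj_inv: "bij y \<Longrightarrow> perm_conj (inv y) (perm_conj y g) = g"
  by (auto simp: perm_conj_def fun_eq_iff inv_inv_eq bij_is_inj bij_is_surj surj_f_inv_f)

lemma inj_perm_conj: "bij y \<Longrightarrow> inj (perm_conj y)"
  by (metis perm_conj_inv injI)

lemma perm_conj_id: "bij y \<Longrightarrow> perm_conj y id = id"
  by (auto simp: perm_conj_def fun_eq_iff bij_is_inj)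

lemma perm_conj_funpow: "bij y \<Longrightarrow> perm_conj y g ^^ k = perm_conj y (g ^^ k)"
  by (induction k) (auto simp: perm_conj_def fun_eq_iff bij_is_inj bij_inv_eq_iff)

lemma cyc_perm_conj: "bij y \<Longrightarrow> cyc (perm_conj y g) = perm_conj y ` cyc g"
  unfolding cyc_def by (auto simp: perm_conj_funpow)

lemma bij_if_in_Sym: "y \<in> Sym n \<Longrightarrow> bij y"
  unfolding Sym_def by (auto intro: permutes_bij)

lemma normalizer_iff: "y \<in> normalizer n G \<longleftrightarrow> y \<in> Sym n \<and> perm_conj y ` G = G"
  unfolding normalizer_def perm_conj_def by simp

lemma bij_if_in_normalizer: "y \<in> normalizer n G \<Longrightarrow> bij y"
  using bij_if_in_Sym normalizer_iff by blast

lemma perm_conj_in_group: "y \<in> normalizer n G \<Longrightarrow> x \<in> G \<Longrightarrow> perm_conj y x \<in> G"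
  unfolding normalizer_iff by blast

lemma inv_in_normalizer:
  assumes y: "y \<in> normalizer n G"
  shows "inv y \<in> normalizer n G"
proof -
  have "inv y \<in> Sym n" using y unfolding normalizer_iff Sym_def by (auto intro: permutes_inv)
  moreover have "perm_conj (inv y) ` G = perm_conj (inv y) ` perm_conj y ` G"
    using y by (simp add: normalizer_iff)
  ultimately show ?thesis
    using perm_conj_inv[OF bij_if_in_normalizer[OF y]] by (simp add: normalizer_iff image_image)
qed

lemma perm_type_perm_conj:
  assumes y: "y \<in> Sym n"
  shows "perm_type n (perm_conj y x) = perm_type n x"
proof -
  have yp: "y permutes {..<n}" using y unfolding Sym_def by simp
  have inj_inv: "inj (inv y)" using bij_if_in_Sym[OF y] bij_imp_bij_inv bij_is_inj by blast
  have "orbit_cyc (perm_conj y x) i = inv y ` orbit_cyc x (y i)" for i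
    unfolding orbit_cyc_def using perm_conj_funpow[OF bij_if_in_Sym[OF y]]
    by (auto simp: perm_conj_def)
  then have "orbit_cyc (perm_conj y x) ` {..<n} = image (inv y) ` orbit_cyc x ` y ` {..<n}"
    by (auto simp: image_image)
  also have "\<dots> = image (inv y) ` orbit_cyc x ` {..<n}"
    by (simp add: permutes_image[OF yp])
  finally have orbits: "orbit_cyc (perm_conj y x) ` {..<n} = image (inv y) ` orbit_cyc x ` {..<n}" .
  have "inj (image (inv y))" using inj_inv by (simp add: inj_image_eq_iff inj_def)
  then have "mset_set (image (inv y) ` orbit_cyc x ` {..<n})
      = image_mset (image (inv y)) (mset_set (orbit_cyc x ` {..<n}))"
    by (simp add: image_mset_mset_set inj_on_subset)
  then have "perm_type n (perm_conj y x)
      = image_mset (card \<circ> image (inv y)) (mset_set (orbit_cyc x ` {..<n}))"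
    unfolding perm_type_def orbits by (simp add: multiset.map_comp)
  also have "\<dots> = perm_type n x"
    unfolding perm_type_def using inj_inv
    by (intro image_mset_cong) (simp add: card_image inj_on_subset)
  finally show ?thesis .
qed

lemma vtype_gen_class:
  assumes x: "x \<in> G"
  shows "vtype n (gen_class G x) = perm_type n x"
proof -
  define \<psi> where "\<psi> = (SOME \<psi>. \<psi> \<in> gen_class G x)"
  have "x \<in> gen_class G x" using x unfolding gen_class_def by simp
  then have "\<psi> \<in> gen_class G x" unfolding \<psi>_def by (rule someI[where P = "\<lambda>\<psi>. \<psi> \<in> gen_class G x"])
  then have "cyc \<psi> = cyc x" unfolding gen_class_def by simp
  moreover have "orbit_cyc f i = (\<lambda>g. g i) ` cyc f" for f i
    unfolding orbit_cyc_def cyc_def by auto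
  ultimately have "orbit_cyc \<psi> = orbit_cyc x" by auto
  then show ?thesis unfolding vtype_def \<psi>_def[symmetric] perm_type_def by simp
qed

definition conj_vertex :: "(nat \<Rightarrow> nat) \<Rightarrow> (nat \<Rightarrow> nat) set \<Rightarrow> (nat \<Rightarrow> nat) set" where
  "conj_vertex y v = perm_conj y ` v"

lemma rpg_verticesE:
  assumes "v \<in> rpg_vertices G"
  obtains x where "x \<in> G" "x \<noteq> id" "v = gen_class G x"
  using assms unfolding rpg_vertices_def nontriv_def by auto

lemma conj_vertex_gen_class:
  assumes y: "y \<in> normalizer n G" and x: "x \<in> G"
  shows "conj_vertex y (gen_class G x) = gen_class G (perm_conj y x)"
proof
  have b: "bij y" using bij_if_in_normalizer[OF y] .
  show "conj_vertex y (gen_class G x) \<subseteq> gen_class G (perm_conj y x)"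
    unfolding conj_vertex_def gen_class_def using cyc_perm_conj[OF b] perm_conj_in_group[OF y] by auto
  show "gen_class G (perm_conj y x) \<subseteq> conj_vertex y (gen_class G x)"
  proof
    fix w assume w: "w \<in> gen_class G (perm_conj y x)"
    then obtain z where z: "z \<in> G" "w = perm_conj y z"
      using y unfolding gen_class_def normalizer_iff by blast
    have "perm_conj y ` cyc z = perm_conj y ` cyc x"
      using w z cyc_perm_conj[OF b] unfolding gen_class_def by simp
    then have "cyc z = cyc x" using inj_perm_conj[OF b] by (simp add: inj_image_eq_iff)
    then show "w \<in> conj_vertex y (gen_class G x)" unfolding conj_vertex_def gen_class_def using z by auto
  qed
qed

lemma conj_vertex_in_rpg_vertices:
  assumes y: "y \<in> normalizer n G" and v: "v \<in> rpg_vertices G"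
  shows "conj_vertex y v \<in> rpg_vertices G"
proof -
  obtain x where x: "x \<in> G" "x \<noteq> id" "v = gen_class G x" using v by (rule rpg_verticesE)
  have b: "bij y" using bij_if_in_normalizer[OF y] .
  have "perm_conj y x \<noteq> id" using x(2) inj_perm_conj[OF b] perm_conj_id[OF b] by (metis injD)
  then show ?thesis using conj_vertex_gen_class[OF y x(1)] x perm_conj_in_group[OF y x(1)]
    unfolding rpg_vertices_def nontriv_def by auto
qed

lemma conj_vertex_inv: "bij y \<Longrightarrow> conj_vertex (inv y) (conj_vertex y v) = v"
  unfolding conj_vertex_def by (simp add: image_image perm_conj_inv)

lemma inj_conj_vertex: "bij y \<Longrightarrow> inj (conj_vertex y)"
  by (metis conj_vertex_inv injI)

lemma rpg_adj_conj_vertex: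
  assumes y: "y \<in> normalizer n G" and adj: "rpg_adj G a b"
  shows "rpg_adj G (conj_vertex y a) (conj_vertex y b)"
proof -
  have b: "bij y" using bij_if_in_normalizer[OF y] .
  obtain x z where xz: "x \<in> a" "z \<in> b" "(\<exists>k\<ge>1. x = z ^^ k) \<or> (\<exists>k\<ge>1. z = x ^^ k)"
    using adj unfolding rpg_adj_def by blast
  have "perm_conj y x \<in> conj_vertex y a" "perm_conj y z \<in> conj_vertex y b"
    using xz unfolding conj_vertex_def by auto
  moreover have "(\<exists>k\<ge>1. perm_conj y x = perm_conj y z ^^ k) \<or> (\<exists>k\<ge>1. perm_conj y z = perm_conj y x ^^ k)"
    using xz(3) perm_conj_funpow[OF b] by metis
  moreover have "conj_vertex y a \<noteq> conj_vertex y b"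
    using adj inj_conj_vertex[OF b] unfolding rpg_adj_def by (metis injD)
  ultimately show ?thesis
    using adj conj_vertex_in_rpg_vertices[OF y] unfolding rpg_adj_def by blast
qed

lemma vtype_conj_vertex:
  assumes y: "y \<in> normalizer n G" and v: "v \<in> rpg_vertices G"
  shows "vtype n (conj_vertex y v) = vtype n v"
proof -
  obtain x where x: "x \<in> G" "v = gen_class G x" using v by (rule rpg_verticesE)
  have "y \<in> Sym n" using y by (simp add: normalizer_iff)
  then show ?thesis using x conj_vertex_gen_class[OF y x(1)] vtype_gen_class
    perm_conj_in_group[OF y x(1)] perm_type_perm_conj by simp
qed

text \<open>Fusion control upgrades the \<open>S\<^sub>n\<close>-conjugacy of elements of equal type to conjugacy
  under the normalizer, so the normalizer acts transitively on the vertices of each type.\<close>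

lemma conj_vertex_transitive_on_type:
  assumes grp: "is_perm_group n G" and fc: "fusion_controlled n G"
    and u: "u \<in> rpg_vertices G" and w: "w \<in> rpg_vertices G" and type: "vtype n w = vtype n u"
  obtains y where "y \<in> normalizer n G" "w = conj_vertex y u"
proof -
  obtain \<psi> where \<psi>: "\<psi> \<in> G" "u = gen_class G \<psi>" using u by (rule rpg_verticesE)
  obtain \<phi> where \<phi>: "\<phi> \<in> G" "w = gen_class G \<phi>" using w by (rule rpg_verticesE)
  have "\<psi> permutes {..<n}" "\<phi> permutes {..<n}"
    using grp \<psi> \<phi> unfolding is_perm_group_def Sym_def by auto
  moreover have "perm_type n \<psi> = perm_type n \<phi>" using type \<psi> \<phi> vtype_gen_class by metis
  ultimately obtain x where x: "x permutes {..<n}" "x \<circ> \<phi> = \<psi> \<circ> x"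
    using perm_type_eq_imp_conjugate by blast
  have "perm_conj x \<psi> = \<phi>" using x permutes_inj
    by (metis perm_conj_def comp_assoc inv_o_cancel id_comp)
  moreover have "x \<in> Sym n" using x(1) unfolding Sym_def by simp
  ultimately obtain y where y: "y \<in> normalizer n G" "perm_conj y \<psi> = \<phi>"
    using fc \<psi>(1) \<phi>(1) unfolding fusion_controlled_def perm_conj_def by metis
  then show ?thesis using that conj_vertex_gen_class[OF y(1) \<psi>(1)] \<psi> \<phi> by simp
qed

section \<open>Components and their translates\<close>

definition component_of :: "(nat \<Rightarrow> nat) set \<Rightarrow> (nat \<Rightarrow> nat) set \<Rightarrow> (nat \<Rightarrow> nat) set set" where
  "component_of G v = {w \<in> rpg_vertices G. (rpg_adj G)\<^sup>*\<^sup>* v w}"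

lemma is_component_rpg_iff:
  "is_component (rpg_vertices G) (rpg_adj G) C \<longleftrightarrow> (\<exists>v\<in>rpg_vertices G. C = component_of G v)"
proof -
  have "(\<lambda>a b. a \<in> rpg_vertices G \<and> b \<in> rpg_vertices G \<and> rpg_adj G a b) = rpg_adj G"
    unfolding rpg_adj_def by blast
  then show ?thesis unfolding is_component_def component_of_def by simp
qed

lemma symp_rpg_adj: "symp (rpg_adj G)"
  unfolding rpg_adj_def by (rule sympI) blast

lemma component_of_eq:
  assumes "w \<in> component_of G v"
  shows "component_of G w = component_of G v"
proof -
  have "(rpg_adj G)\<^sup>*\<^sup>* v w" "(rpg_adj G)\<^sup>*\<^sup>* w v"
    using assms sympD[OF symp_rtranclp[OF symp_rpg_adj]] unfolding component_of_def by auto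
  then show ?thesis unfolding component_of_def by (auto intro: rtranclp_trans)
qed

lemma rtranclp_rpg_adj_conj_vertex:
  assumes y: "y \<in> normalizer n G"
  shows "(rpg_adj G)\<^sup>*\<^sup>* a b \<Longrightarrow> (rpg_adj G)\<^sup>*\<^sup>* (conj_vertex y a) (conj_vertex y b)"
  by (induction rule: rtranclp_induct) (auto intro: rtranclp.rtrancl_into_rtrancl rpg_adj_conj_vertex[OF y])

lemma conj_vertex_component_of:
  assumes y: "y \<in> normalizer n G" and v: "v \<in> rpg_vertices G"
  shows "conj_vertex y ` component_of G v = component_of G (conj_vertex y v)"
proof
  show "conj_vertex y ` component_of G v \<subseteq> component_of G (conj_vertex y v)"
    unfolding component_of_def
    using conj_vertex_in_rpg_vertices[OF y] rtranclp_rpg_adj_conj_vertex[OF y] by auto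
  show "component_of G (conj_vertex y v) \<subseteq> conj_vertex y ` component_of G v"
  proof
    fix w assume w: "w \<in> component_of G (conj_vertex y v)"
    have b: "bij y" using bij_if_in_normalizer[OF y] .
    have y': "inv y \<in> normalizer n G" using inv_in_normalizer[OF y] .
    have "conj_vertex (inv y) w \<in> component_of G v"
      using w conj_vertex_in_rpg_vertices[OF y'] rtranclp_rpg_adj_conj_vertex[OF y']
      unfolding component_of_def by (fastforce simp: conj_vertex_inv[OF b])
    moreover have "conj_vertex y (conj_vertex (inv y) w) = w"
      using conj_vertex_inv[OF bij_imp_bij_inv[OF b], of w] by (simp add: inv_inv_eq[OF b])
    ultimately show "w \<in> conj_vertex y ` component_of G v" by force
  qed
qed

lemma finite_rpg_vertices:
  assumes "is_perm_group n G"
  shows "finite (rpg_vertices G)"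
proof -
  have "finite (Sym n)" unfolding Sym_def by (rule finite_permutations) simp
  then have "finite G" using assms finite_subset unfolding is_perm_group_def by blast
  then show ?thesis unfolding rpg_vertices_def nontriv_def by simp
qed

lemma card_fibre_eq_card_mult:
  assumes V: "finite V" and sub: "\<forall>D\<in>\<D>. D \<subseteq> V" and disj: "pairwise disjnt \<D>"
    and cover: "{v \<in> V. f v = t} \<subseteq> \<Union>\<D>" and uniform: "\<forall>D\<in>\<D>. card {v \<in> D. f v = t} = m"
  shows "card {v \<in> V. f v = t} = card \<D> * m"
proof -
  have fin: "finite \<D>" using V sub by (meson Pow_iff finite_Pow_iff finite_subset subsetI)
  have "{v \<in> V. f v = t} = (\<Union>D\<in>\<D>. {v \<in> D. f v = t})" using cover sub by blast
  also have "card \<dots> = (\<Sum>D\<in>\<D>. card {v \<in> D. f v = t})"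
  proof (rule card_UN_disjoint[OF fin])
    show "\<forall>D\<in>\<D>. finite {v \<in> D. f v = t}" using V sub by (auto intro: finite_subset)
    show "\<forall>D\<in>\<D>. \<forall>D'\<in>\<D>. D \<noteq> D' \<longrightarrow> {v \<in> D. f v = t} \<inter> {v \<in> D'. f v = t} = {}"
      using disj unfolding pairwise_def disjnt_def by blast
  qed
  also have "\<dots> = card \<D> * m" using uniform by simp
  finally show ?thesis .
qed

definition normalizer_translates ::
    "nat \<Rightarrow> (nat \<Rightarrow> nat) set \<Rightarrow> (nat \<Rightarrow> nat) set set \<Rightarrow> (nat \<Rightarrow> nat) set set set" where
  "normalizer_translates n G C = (\<lambda>y. conj_vertex y ` C) ` normalizer n G"

lemma kcount_eq_card_translates_mult:
  assumes grp: "is_perm_group n G" and fc: "fusion_controlled n G"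
    and C: "is_component (rpg_vertices G) (rpg_adj G) C" and T: "T \<in> vtype n ` C"
  shows "kcount n (rpg_vertices G) T = card (normalizer_translates n G C) * kcount n C T"
  unfolding kcount_def
proof (rule card_fibre_eq_card_mult[OF finite_rpg_vertices[OF grp]])
  obtain c where c: "c \<in> rpg_vertices G" "C = component_of G c"
    using C by (auto simp: is_component_rpg_iff)
  have C_sub: "C \<subseteq> rpg_vertices G" using c(2) by (simp add: component_of_def)
  have translate: "conj_vertex y ` C = component_of G (conj_vertex y c)" if "y \<in> normalizer n G" for y
    using conj_vertex_component_of[OF that c(1)] c(2) by simp
  show "\<forall>D\<in>normalizer_translates n G C. D \<subseteq> rpg_vertices G"
    using C_sub conj_vertex_in_rpg_vertices unfolding normalizer_translates_def by blast
  show "pairwise disjnt (normalizer_translates n G C)"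
  proof (rule pairwiseI)
    fix D D' assume "D \<in> normalizer_translates n G C" "D' \<in> normalizer_translates n G C" "D \<noteq> D'"
    moreover from calculation obtain a b where "D = component_of G a" "D' = component_of G b"
      using translate unfolding normalizer_translates_def by blast
    ultimately show "disjnt D D'" using component_of_eq unfolding disjnt_def by blast
  qed
  show "{v \<in> rpg_vertices G. vtype n v = T} \<subseteq> \<Union>(normalizer_translates n G C)"
  proof
    fix v assume v: "v \<in> {v \<in> rpg_vertices G. vtype n v = T}"
    obtain u where u: "u \<in> C" "vtype n u = T" using T by blast
    obtain y where "y \<in> normalizer n G" "v = conj_vertex y u"
      using conj_vertex_transitive_on_type[OF grp fc] u v C_sub by blast
    then show "v \<in> \<Union>(normalizer_translates n G C)"
      using u(1) unfolding normalizer_translates_def by blast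
  qed
  show "\<forall>D\<in>normalizer_translates n G C. card {v \<in> D. vtype n v = T} = card {v \<in> C. vtype n v = T}"
  proof
    fix D assume "D \<in> normalizer_translates n G C"
    then obtain y where y: "y \<in> normalizer n G" "D = conj_vertex y ` C"
      unfolding normalizer_translates_def by blast
    have "{v \<in> D. vtype n v = T} = conj_vertex y ` {v \<in> C. vtype n v = T}"
      using vtype_conj_vertex[OF y(1)] C_sub y(2) by auto
    then show "card {v \<in> D. vtype n v = T} = card {v \<in> C. vtype n v = T}"
      using inj_conj_vertex[OF bij_if_in_normalizer[OF y(1)]]
      by (simp add: card_image inj_on_subset)
  qed
qed

section \<open>Type counts and the type graph\<close>

lemma graph_iso_image_iff_inj_on:
  assumes "finite C"
  shows "graph_iso C E (f ` C) (\<lambda>s t. \<exists>a\<in>C. \<exists>b\<in>C. E a b \<and> f a = s \<and> f b = t) \<longleftrightarrow> inj_on f C"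
proof
  assume "graph_iso C E (f ` C) (\<lambda>s t. \<exists>a\<in>C. \<exists>b\<in>C. E a b \<and> f a = s \<and> f b = t)"
  then obtain g where "bij_betw g C (f ` C)" unfolding graph_iso_def by blast
  then have "card (f ` C) = card C" by (simp add: bij_betw_same_card)
  then show "inj_on f C" by (rule eq_card_imp_inj_on[OF assms])
next
  assume inj: "inj_on f C"
  then have "bij_betw f C (f ` C)" by (simp add: bij_betw_def)
  moreover have "E a b \<longleftrightarrow> (\<exists>a'\<in>C. \<exists>b'\<in>C. E a' b' \<and> f a' = f a \<and> f b' = f b)"
    if "a \<in> C" "b \<in> C" for a b
    using inj that unfolding inj_on_def by metis
  ultimately show "graph_iso C E (f ` C) (\<lambda>s t. \<exists>a\<in>C. \<exists>b\<in>C. E a b \<and> f a = s \<and> f b = t)"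
    unfolding graph_iso_def by blast
qed

lemma inj_on_iff_card_fibres_eq_1:
  assumes "finite C"
  shows "inj_on f C \<longleftrightarrow> (\<forall>t\<in>f ` C. card {v \<in> C. f v = t} = 1)"
proof
  assume "inj_on f C"
  then have "{v \<in> C. f v = f u} = {u}" if "u \<in> C" for u
    using that unfolding inj_on_def by auto
  then show "\<forall>t\<in>f ` C. card {v \<in> C. f v = t} = 1" by auto
next
  assume fibres: "\<forall>t\<in>f ` C. card {v \<in> C. f v = t} = 1"
  show "inj_on f C"
  proof
    fix u v assume "u \<in> C" "v \<in> C" "f u = f v"
    then have "u \<in> {w \<in> C. f w = f u}" "v \<in> {w \<in> C. f w = f u}"
      and "card {w \<in> C. f w = f u} = 1" using fibres by auto
    then show "u = v" by (metis card_1_singletonE singletonD)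
  qed
qed

lemma kcount_mono: "finite V \<Longrightarrow> C \<subseteq> V \<Longrightarrow> kcount n C T \<le> kcount n V T"
  unfolding kcount_def by (rule card_mono) auto

lemma kcount_eq_iff_fibre_subset:
  assumes "finite V" "C \<subseteq> V"
  shows "kcount n C T = kcount n V T \<longleftrightarrow> {v \<in> V. vtype n v = T} \<subseteq> C"
proof -
  have sub: "{v \<in> C. vtype n v = T} \<subseteq> {v \<in> V. vtype n v = T}"
    and fin: "finite {v \<in> V. vtype n v = T}" using assms by auto
  have "{v \<in> C. vtype n v = T} = {v \<in> V. vtype n v = T} \<longleftrightarrow> {v \<in> V. vtype n v = T} \<subseteq> C"
    using assms(2) by blast
  then show ?thesis unfolding kcount_def using card_subset_eq[OF fin sub] by auto
qed

lemma graph_iso_timg_iff: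
  assumes "finite C"
  shows "graph_iso C (rpg_adj G) (vtype n ` C) (timg_adj n G C) \<longleftrightarrow>
    (\<forall>T\<in>vtype n ` C. kcount n C T = 1)"
proof -
  have "timg_adj n G C = (\<lambda>s t. \<exists>a\<in>C. \<exists>b\<in>C. rpg_adj G a b \<and> vtype n a = s \<and> vtype n b = t)"
    by (simp add: fun_eq_iff timg_adj_def)
  then show ?thesis unfolding kcount_def
    by (simp only: graph_iso_image_iff_inj_on[OF assms] inj_on_iff_card_fibres_eq_1[OF assms])
qed

lemma kcount_uniform_multiple:
  assumes grp: "is_perm_group n G" and fc: "fusion_controlled n G"
    and C: "is_component (rpg_vertices G) (rpg_adj G) C"
  obtains m where "m > 0"
    and "\<And>T. T \<in> vtype n ` C \<Longrightarrow>
      kcount n (rpg_vertices G) T = m * kcount n C T \<and> kcount n C T > 0"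
proof
  let ?m = "card (normalizer_translates n G C)"
  obtain c where c: "c \<in> rpg_vertices G" "C = component_of G c"
    using C by (auto simp: is_component_rpg_iff)
  have C_sub: "C \<subseteq> rpg_vertices G" and "c \<in> C"
    using c by (auto simp: component_of_def)
  have fin_V: "finite (rpg_vertices G)" using finite_rpg_vertices[OF grp] .
  then have pos: "kcount n C T > 0" if "T \<in> vtype n ` C" for T
    using that finite_subset[OF C_sub] by (auto simp: kcount_def card_gt_0_iff)
  then show "kcount n (rpg_vertices G) T = ?m * kcount n C T \<and> kcount n C T > 0"
    if "T \<in> vtype n ` C" for T
    using kcount_eq_card_translates_mult[OF grp fc C that] that by simp
  have c_type: "vtype n c \<in> vtype n ` C" using \<open>c \<in> C\<close> by blast
  have "kcount n C (vtype n c) \<le> ?m * kcount n C (vtype n c)"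
    using kcount_mono[OF fin_V C_sub, of n "vtype n c"]
    unfolding kcount_eq_card_translates_mult[OF grp fc C c_type] .
  then show "?m > 0" using pos[OF c_type] by (cases ?m) simp_all
qed

theorem corollary6p7:
  fixes n :: nat and G :: "(nat \<Rightarrow> nat) set" and C :: "(nat \<Rightarrow> nat) set set"
  assumes "is_perm_group n G"
    and "fusion_controlled n G"
    and "is_component (rpg_vertices G) (rpg_adj G) C"
  defines "TC \<equiv> vtype n ` C"
    and "k \<equiv> kcount n (rpg_vertices G)"
    and "kC \<equiv> kcount n C"
  shows "(\<forall>T\<in>TC. \<forall>T'\<in>TC. real (k T) / real (kC T) = real (k T') / real (kC T'))
    \<and> (graph_iso C (rpg_adj G) TC (timg_adj n G C) \<longleftrightarrow>
         (\<exists>T\<in>TC. kC T = 1 \<and> (\<forall>T'\<in>TC. k T = k T')))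
    \<and> ((\<exists>T. {v \<in> rpg_vertices G. vtype n v = T} \<noteq> {} \<and>
              {v \<in> rpg_vertices G. vtype n v = T} \<subseteq> C) \<longrightarrow>
         (\<forall>T'\<in>TC. {v \<in> rpg_vertices G. vtype n v = T'} \<subseteq> C))
    \<and> ((\<exists>T\<in>TC. kC T = k T \<and> k T > 1) \<longrightarrow>
         \<not> graph_iso C (rpg_adj G) TC (timg_adj n G C))"
proof -
  obtain m where m_pos: "m > 0" and k_eq: "\<And>T. T \<in> TC \<Longrightarrow> k T = m * kC T \<and> kC T > 0"
    using kcount_uniform_multiple[OF assms(1-3)] unfolding TC_def k_def kC_def by blast
  have C_sub: "C \<subseteq> rpg_vertices G" and "C \<noteq> {}"
    using assms(3) by (auto simp: is_component_rpg_iff component_of_def)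
  have fin_V: "finite (rpg_vertices G)" using finite_rpg_vertices[OF assms(1)] .
  have full_iff: "kC T = k T \<longleftrightarrow> {v \<in> rpg_vertices G. vtype n v = T} \<subseteq> C" for T
    using kcount_eq_iff_fibre_subset[OF fin_V C_sub] by (simp add: k_def kC_def)
  have iso_iff: "graph_iso C (rpg_adj G) TC (timg_adj n G C) \<longleftrightarrow> (\<forall>T\<in>TC. kC T = 1)"
    using graph_iso_timg_iff finite_subset[OF C_sub fin_V] by (simp add: TC_def kC_def)
  show ?thesis
  proof (intro conjI)
    show "\<forall>T\<in>TC. \<forall>T'\<in>TC. real (k T) / real (kC T) = real (k T') / real (kC T')"
      using k_eq by simp
    show "graph_iso C (rpg_adj G) TC (timg_adj n G C) \<longleftrightarrow> (\<exists>T\<in>TC. kC T = 1 \<and> (\<forall>T'\<in>TC. k T = k T'))"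
    proof
      assume "graph_iso C (rpg_adj G) TC (timg_adj n G C)"
      then have "\<forall>T\<in>TC. kC T = 1 \<and> k T = m" using iso_iff k_eq by simp
      then show "\<exists>T\<in>TC. kC T = 1 \<and> (\<forall>T'\<in>TC. k T = k T')" using \<open>C \<noteq> {}\<close> TC_def by auto
    next
      assume "\<exists>T\<in>TC. kC T = 1 \<and> (\<forall>T'\<in>TC. k T = k T')"
      then have "m * kC T' = m" if "T' \<in> TC" for T' using k_eq that by fastforce
      then show "graph_iso C (rpg_adj G) TC (timg_adj n G C)" using iso_iff m_pos by simp
    qed
    show "(\<exists>T. {v \<in> rpg_vertices G. vtype n v = T} \<noteq> {} \<and> {v \<in> rpg_vertices G. vtype n v = T} \<subseteq> C) \<longrightarrow>
        (\<forall>T'\<in>TC. {v \<in> rpg_vertices G. vtype n v = T'} \<subseteq> C)"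
    proof (intro impI ballI)
      assume "\<exists>T. {v \<in> rpg_vertices G. vtype n v = T} \<noteq> {} \<and> {v \<in> rpg_vertices G. vtype n v = T} \<subseteq> C"
      then obtain T where T: "T \<in> TC" "kC T = k T" using full_iff unfolding TC_def by blast
      then have "m = 1" using k_eq[OF T(1)] by simp
      fix T' assume "T' \<in> TC"
      then show "{v \<in> rpg_vertices G. vtype n v = T'} \<subseteq> C" using full_iff[of T'] k_eq \<open>m = 1\<close> by simp
    qed
    show "(\<exists>T\<in>TC. kC T = k T \<and> k T > 1) \<longrightarrow> \<not> graph_iso C (rpg_adj G) TC (timg_adj n G C)"
      using iso_iff by auto
  qed
qed

end
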